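(* Let $C=\{c_1,\dots,c_m\}$ with $m\ge 2$, let $\mathcal{T}$ be a rooted ordered tree whose leaves are exactly the candidates of $C$, and let $F$ be the frequency matrix of the distribution $\mathcal{D}_{\mathrm{GS}}^{\mathcal{T}}$, with rows indexed by positions $1,\dots,m$ and columns indexed by candidates $c_1,\dots,c_m$. (1) If $\mathcal{T}=\mathrm{Flat}(c_1,\dots,c_m)$, then $F=\mathrm{AN}$, i.e., the entry of $F$ for position $i$ and candidate $c_j$ equals $\tfrac12\mathbb{1}_{i=j}+\tfrac12\mathbb{1}_{i=m-j+1}$. (2) If $m$ is a power of two and $\mathcal{T}=\mathrm{Bal}(c_1,\dots,c_m)$, then $F=\mathrm{UN}$, the $m\times m$ matrix with all entries $1/m$. (3) If $\mathcal{T}=\mathrm{CP}(c_1,\dots,c_m)$, then for each $j\in[m]$ and $i\in[m]$, the probability that $c_j$ appears in position $i$ in a vote sampled from $\mathcal{D}_{\mathrm{GS}}^{\mathcal{T}}$ is \[\frac{1}{2^j}\binom{j-1}{i-1}\mathbb{1}_{i\le j}+\frac{1}{2^j}\binom{j-1}{(i-1)-(m-j)}\mathbb{1}_{i>m-j}.\]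
   Context: A vote (preference order) over a finite candidate set $C$ is a total order on $C$; position 1 is the top. A vote distribution $\mathcal{D}$ assigns probabilities to all votes over $C$. Its frequency matrix is $\sum_v \mathcal{D}(v)\cdot \#(v)$, where $\#(v)$ is the $m\times m$ permutation matrix whose entry for position $i$ and candidate $c$ is $1$ iff $c$ is in position $i$ in $v$; equivalently, the entry for position $i$ and candidate $c$ is the probability that $c$ is in position $i$ in a vote sampled from $\mathcal{D}$. For a rooted ordered tree $\mathcal{T}$ whose leaves are the candidates, the frontier is the order of leaves from left to right; a vote is consistent with $\mathcal{T}$ if it is the frontier of the tree obtained by reversing the order of children of some set of internal nodes. $\mathcal{D}_{\mathrm{GS}}^{\mathcal{T}}$ is the uniform distribution over votes consistent with $\mathcal{T}$ (equivalently: reverse each internal node's children independently with probability $1/2$ and output the frontier). $\mathrm{Flat}(c_1,\dots,c_m)$ is the tree with a single internal node (the root) whose children from left to right are $c_1,\dots,c_m$. $\mathrm{Bal}(c_1,\dots,c_m)$ is the perfectly balanced binary tree with frontier $c_1,\dots,c_m$. $\mathrm{CP}(c_1,\dots,c_m)$ (caterpillar) has internal nodes $x_1,\dots,x_{m-1}$, root $x_1$; for $j\in[m-2]$, $x_j$ has left child $c_j$ and right child $x_{j+1}$, and $x_{m-1}$ has children $c_{m-1}$ (left) and $c_m$ (right). $\mathbb{1}$ denotes an indicator. *)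

theory Defs
  imports "HOL-Probability.Probability"
begin

text \<open>Rooted ordered trees whose leaves carry candidates; candidate c_j is the natural number j.\<close>
datatype ltree = Lf nat | Nd "ltree list"

text \<open>Votes consistent with a tree: frontiers obtained by reversing the children
 of some set of internal nodes (the choice at each node is independent).\<close>
fun votes :: "ltree \<Rightarrow> nat list set" where
  "votes (Lf c) = {[c]}"
| "votes (Nd ts) = concat ` listset (map votes ts) \<union> (concat \<circ> rev) ` listset (map votes ts)"

definition D_GS :: "ltree \<Rightarrow> nat list pmf" where
  "D_GS T = pmf_of_set (votes T)"

definition freq :: "ltree \<Rightarrow> nat \<Rightarrow> nat \<Rightarrow> real" where
  "freq T i c = measure_pmf.prob (D_GS T) {v. v ! (i - 1) = c}"

definition Flat :: "nat \<Rightarrow> ltree" where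
  "Flat m = Nd (map Lf [1..<m+1])"

fun balT :: "nat \<Rightarrow> nat \<Rightarrow> ltree" where
  "balT 0 s = Lf s"
| "balT (Suc d) s = Nd [balT d s, balT d (s + 2 ^ d)]"

definition Bal :: "nat \<Rightarrow> ltree" where
  "Bal k = balT k 1"

fun cat :: "nat list \<Rightarrow> ltree" where
  "cat [] = Nd []"
| "cat [a] = Lf a"
| "cat [a, b] = Nd [Lf a, Lf b]"
| "cat (a # b # c # xs) = Nd [Lf a, cat (b # c # xs)]"

definition CP :: "nat \<Rightarrow> ltree" where
  "CP m = cat [1..<m+1]"

end

theory Submission
  imports Defs
begin

text \<open>At a binary node whose subtrees have
  disjoint leaf sets the votes split into two equally large families, the concatenations of votes of
  the subtrees in either order, so the probability that c sits at position i is the average of the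
  two probabilities for the concatenations, which are read off the subtrees. The flat tree has only
  the two votes c_1 ... c_m and its reverse. In a balanced tree each candidate lies in exactly one half,
  and induction on the depth shows that it is uniformly distributed over the positions. In the
  caterpillar, c_1 is first or last with probability 1/2 each, while every other candidate is
  shifted one position to the right with probability 1/2; Pascal's rule then produces the binomial
  coefficients.\<close>

subsection \<open>Votes and frequencies\<close>

fun leaves :: "ltree \<Rightarrow> nat list" where
  "leaves (Lf c) = [c]"
| "leaves (Nd ts) = concat (map leaves ts)"

lemma in_listset_iff: "xs \<in> listset As \<longleftrightarrow> list_all2 (\<in>) xs As"
  by (induction As arbitrary: xs) (auto simp: set_Cons_def list_all2_Cons2)

lemma finite_listset: "(\<And>A. A \<in> set As \<Longrightarrow> finite A) \<Longrightarrow> finite (listset As)"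
proof (induction As)
  case (Cons A As)
  have "listset (A # As) = (\<lambda>(x, xs). x # xs) ` (A \<times> listset As)"
    by (auto simp: set_Cons_def)
  then show ?case using Cons by simp
qed simp

lemma listset_nonempty: "(\<And>A. A \<in> set As \<Longrightarrow> A \<noteq> {}) \<Longrightarrow> listset As \<noteq> {}"
  by (induction As) (auto simp: set_Cons_def)

lemma finite_votes: "finite (votes t)"
proof (induction t)
  case (Nd ts)
  then have "finite (listset (map votes ts))" by (intro finite_listset) auto
  then show ?case by simp
qed simp

lemma votes_nonempty: "votes t \<noteq> {}"
proof (induction t)
  case (Nd ts)
  then have "listset (map votes ts) \<noteq> {}" by (intro listset_nonempty) auto
  then show ?case by simp
qed simp

lemma mset_vote: "v \<in> votes t \<Longrightarrow> mset v = mset (leaves t)"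
proof (induction t arbitrary: v)
  case (Nd ts)
  then obtain vs where vs: "list_all2 (\<in>) vs (map votes ts)" and "v = concat vs \<or> v = concat (rev vs)"
    by (auto simp: in_listset_iff)
  moreover have "map mset vs = map (mset \<circ> leaves) ts"
    using vs Nd.IH by (auto simp: list_all2_conv_all_nth intro!: nth_equalityI)
  ultimately show ?case
    by (auto simp: mset_concat rev_map[symmetric])
qed simp

lemma length_vote: "v \<in> votes t \<Longrightarrow> length v = length (leaves t)"
  by (metis mset_eq_length mset_vote)

lemma set_vote: "v \<in> votes t \<Longrightarrow> set v = set (leaves t)"
  by (metis mset_eq_setD mset_vote)

lemma freq_eq_card: "freq T i c = card {v \<in> votes T. v ! (i - 1) = c} / card (votes T)"
  unfolding freq_def D_GS_def
  by (simp add: measure_pmf_of_set finite_votes votes_nonempty Int_def conj_commute)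

definition appends :: "'a list set \<Rightarrow> 'a list set \<Rightarrow> 'a list set" where
  "appends A B = (\<lambda>(a, b). a @ b) ` (A \<times> B)"

lemma votes_Nd2: "votes (Nd [t1, t2]) = appends (votes t1) (votes t2) \<union> appends (votes t2) (votes t1)"
proof -
  have "listset [votes t1, votes t2] = (\<lambda>(a, b). [a, b]) ` (votes t1 \<times> votes t2)"
    by (auto simp: set_Cons_def)
  then show ?thesis
    by (force simp: appends_def image_image case_prod_unfold image_iff)
qed

lemma inj_on_appends:
  assumes "\<forall>a\<in>A. length a = n"
  shows "inj_on (\<lambda>(a, b). a @ b) (A \<times> B)"
  using assms by (auto simp: inj_on_def)

lemma card_appends:
  assumes "\<forall>a\<in>A. length a = n"
  shows "card (appends A B) = card A * card B"
  unfolding appends_def by (simp add: card_image[OF inj_on_appends[OF assms]] card_cartesian_product)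

lemma card_appends_nth:
  assumes "\<forall>a\<in>A. length a = n"
  shows "card {v \<in> appends A B. v ! k = c} =
    (if k < n then card {a \<in> A. a ! k = c} * card B else card A * card {b \<in> B. b ! (k - n) = c})"
proof -
  let ?P = "{p \<in> A \<times> B. (fst p @ snd p) ! k = c}"
  have "{v \<in> appends A B. v ! k = c} = (\<lambda>(a, b). a @ b) ` ?P"
    by (auto simp: appends_def)
  moreover have "inj_on (\<lambda>(a, b). a @ b) ?P"
    using inj_on_appends[OF assms] by (rule inj_on_subset) auto
  moreover have "?P = (if k < n then {a \<in> A. a ! k = c} \<times> B else A \<times> {b \<in> B. b ! (k - n) = c})"
    using assms by (auto simp: nth_append)
  ultimately show ?thesis
    by (simp add: card_image card_cartesian_product)
qed

lemma appends_swap_disjoint: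
  assumes "\<forall>a\<in>A. a \<noteq> [] \<and> set a \<subseteq> X" "\<forall>b\<in>B. b \<noteq> [] \<and> set b \<subseteq> Y" "X \<inter> Y = {}"
  shows "appends A B \<inter> appends B A = {}"
proof -
  have "a @ b \<noteq> b' @ a'" if "a \<in> A" "b' \<in> B" for a b a' b'
  proof
    assume "a @ b = b' @ a'"
    then have "hd a = hd b'"
      using that assms by (metis hd_append2)
    then show False
      using that assms by (metis disjoint_iff hd_in_set subsetD)
  qed
  then show ?thesis
    by (force simp: appends_def)
qed

lemma freq_appends:
  assumes "leaves t1 \<noteq> []"
  shows "card {v \<in> appends (votes t1) (votes t2). v ! (i - 1) = c} / card (appends (votes t1) (votes t2))
    = (if i \<le> length (leaves t1) then freq t1 i c else freq t2 (i - length (leaves t1)) c)"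
proof -
  have len: "\<forall>a\<in>votes t1. length a = length (leaves t1)"
    by (simp add: length_vote)
  have "card (votes t1) \<noteq> 0" "card (votes t2) \<noteq> 0"
    by (simp_all add: finite_votes votes_nonempty)
  moreover have "i - 1 < length (leaves t1) \<longleftrightarrow> i \<le> length (leaves t1)"
    using assms by (cases i) auto
  ultimately show ?thesis
    unfolding card_appends_nth[OF len] card_appends[OF len] freq_eq_card
    by (simp add: diff_right_commute)
qed

lemma freq_Nd2:
  assumes "leaves t1 \<noteq> []" "leaves t2 \<noteq> []" "set (leaves t1) \<inter> set (leaves t2) = {}"
  shows "freq (Nd [t1, t2]) i c =
    ((if i \<le> length (leaves t1) then freq t1 i c else freq t2 (i - length (leaves t1)) c)
   + (if i \<le> length (leaves t2) then freq t2 i c else freq t1 (i - length (leaves t2)) c)) / 2"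
proof -
  let ?A = "appends (votes t1) (votes t2)" and ?B = "appends (votes t2) (votes t1)"
  let ?cnt = "\<lambda>V. real (card {v \<in> V. v ! (i - 1) = c})"
  have disj: "?A \<inter> ?B = {}"
    using assms by (intro appends_swap_disjoint) (auto simp: set_vote dest: length_vote)
  have fin: "finite ?A" "finite ?B"
    by (simp_all add: appends_def finite_votes)
  have len: "\<forall>a\<in>votes t. length a = length (leaves t)" for t
    by (simp add: length_vote)
  have "card ?A = card ?B"
    by (simp add: card_appends[OF len])
  have "{v \<in> ?A \<union> ?B. v ! (i - 1) = c} = {v \<in> ?A. v ! (i - 1) = c} \<union> {v \<in> ?B. v ! (i - 1) = c}"
    by auto
  then have "freq (Nd [t1, t2]) i c = (?cnt ?A + ?cnt ?B) / (card ?A + card ?B)"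
    unfolding freq_eq_card votes_Nd2 using fin disj
    by (simp add: card_Un_disjoint disjoint_iff)
  also have "\<dots> = (?cnt ?A / card ?A + ?cnt ?B / card ?B) / 2"
    using \<open>card ?A = card ?B\<close> by (simp add: add_divide_distrib)
  finally show ?thesis
    unfolding freq_appends[OF assms(1)] freq_appends[OF assms(2)] .
qed

lemma freq_Lf:
  assumes "i \<le> 1"
  shows "freq (Lf a) i c = of_bool (c = a)"
proof -
  have "{v \<in> votes (Lf a). v ! (i - 1) = c} = (if c = a then {[a]} else {})"
    using assms by auto
  then show ?thesis
    by (simp add: freq_eq_card)
qed

lemma freq_eq_0_if_not_leaf:
  assumes "c \<notin> set (leaves t)" "i \<in> {1..length (leaves t)}"
  shows "freq t i c = 0"
proof -
  have "v ! (i - 1) \<noteq> c" if "v \<in> votes t" for v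
    using assms that nth_mem[of "i - 1" v] by (auto simp: set_vote length_vote)
  then have none: "{v \<in> votes t. v ! (i - 1) = c} = {}"
    by blast
  show ?thesis
    unfolding freq_eq_card none by simp
qed

subsection \<open>Flat trees\<close>

lemma listset_singletons: "listset (map (\<lambda>x. {[x]}) xs) = {map (\<lambda>x. [x]) xs}"
  by (induction xs) (auto simp: set_Cons_def)

lemma votes_Nd_map_Lf: "votes (Nd (map Lf xs)) = {xs, rev xs}"
  by (simp add: comp_def listset_singletons rev_map insert_commute)

lemma freq_Nd_map_Lf:
  assumes "xs \<noteq> rev xs"
  shows "freq (Nd (map Lf xs)) i c = (of_bool (xs ! (i - 1) = c) + of_bool (rev xs ! (i - 1) = c)) / 2"
proof -
  have "{v \<in> {xs, rev xs}. v ! (i - 1) = c} =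
      (if xs ! (i - 1) = c then {xs} else {}) \<union> (if rev xs ! (i - 1) = c then {rev xs} else {})"
    by auto
  then show ?thesis
    using assms unfolding freq_eq_card votes_Nd_map_Lf by simp
qed

lemma freq_Flat:
  assumes "2 \<le> m" "i \<in> {1..m}" "j \<in> {1..m}"
  shows "freq (Flat m) i j = 1/2 * of_bool (i = j) + 1/2 * of_bool (i = m - j + 1)"
proof -
  let ?xs = "[1..<m+1]"
  have "?xs ! 0 \<noteq> rev ?xs ! 0"
    using assms(1) by (simp add: rev_nth nth_upt del: upt_Suc)
  then have "?xs \<noteq> rev ?xs"
    by metis
  moreover have "?xs ! (i - 1) = i"
    using assms(2) by (simp add: nth_upt del: upt_Suc)
  moreover have "rev ?xs ! (i - 1) = m + 1 - i"
    using assms(2) by (subst rev_nth) (auto simp: nth_upt simp del: upt_Suc)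
  moreover have "m + 1 - i = j \<longleftrightarrow> i = m - j + 1"
    using assms by auto
  ultimately show ?thesis
    unfolding Flat_def by (simp add: freq_Nd_map_Lf)
qed

subsection \<open>Balanced trees\<close>

lemma leaves_balT: "leaves (balT d s) = [s..<s + 2 ^ d]"
proof (induction d arbitrary: s)
  case (Suc d)
  have "[s..<s + 2 ^ d] @ [s + 2 ^ d..<s + 2 ^ d + 2 ^ d] = [s..<s + 2 ^ d + 2 ^ d]"
    by (rule upt_add_eq_append[symmetric]) simp
  then show ?case
    using Suc by (simp add: mult_2 add.assoc)
qed simp

lemma freq_balT:
  assumes "i \<in> {1..2 ^ d}" "c \<in> {s..<s + 2 ^ d}"
  shows "freq (balT d s) i c = 1 / 2 ^ d"
  using assms
proof (induction d arbitrary: s i c)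
  case 0
  then show ?case by (simp add: freq_Lf)
next
  case (Suc d)
  let ?t1 = "balT d s" and ?t2 = "balT d (s + 2 ^ d)"
  \<comment> \<open>Both halves have 2^d leaves, so both orders read the same position k of a half.\<close>
  define k where "k = (if i \<le> 2 ^ d then i else i - 2 ^ d)"
  have k: "k \<in> {1..2 ^ d}"
    using Suc.prems(1) by (auto simp: k_def)
  have "freq (balT (Suc d) s) i c = (freq ?t1 k c + freq ?t2 k c) / 2"
    by (auto simp: freq_Nd2 leaves_balT k_def)
  moreover have "freq ?t1 k c + freq ?t2 k c = 1 / 2 ^ d"
  proof (cases "c < s + 2 ^ d")
    case True
    then show ?thesis
      using Suc.IH[OF k] k Suc.prems(2) freq_eq_0_if_not_leaf[of c ?t2 k] by (simp add: leaves_balT)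
  next
    case False
    then show ?thesis
      using Suc.IH[OF k] k Suc.prems(2) freq_eq_0_if_not_leaf[of c ?t1 k] by (simp add: leaves_balT)
  qed
  ultimately show ?case
    by simp
qed

lemma freq_Bal:
  assumes "m = 2 ^ k" "i \<in> {1..m}" "j \<in> {1..m}"
  shows "freq (Bal k) i j = 1 / real m"
  using assms freq_balT[of i k j 1] by (simp add: Bal_def)

subsection \<open>Caterpillars\<close>

lemma cat_Cons: "ys \<noteq> [] \<Longrightarrow> cat (a # ys) = Nd [Lf a, cat ys]"
  by (cases ys rule: cat.cases) auto

lemma leaves_cat: "xs \<noteq> [] \<Longrightarrow> leaves (cat xs) = xs"
  by (induction xs rule: cat.induct) auto

lemma freq_cat_Cons:
  assumes "ys \<noteq> []" "a \<notin> set ys"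
  shows "freq (cat (a # ys)) i c =
    ((if i \<le> 1 then freq (Lf a) i c else freq (cat ys) (i - 1) c)
   + (if i \<le> length ys then freq (cat ys) i c else freq (Lf a) (i - length ys) c)) / 2"
  using assms by (simp add: cat_Cons freq_Nd2 leaves_cat)

lemma freq_cat_Cons_head:
  assumes "ys \<noteq> []" "a \<notin> set ys" "i \<in> {1..length ys + 1}"
  shows "freq (cat (a # ys)) i a = (of_bool (i = 1) + of_bool (i = length ys + 1)) / 2"
proof -
  have zero: "freq (cat ys) k a = 0" if "k \<in> {1..length ys}" for k
    using assms(1,2) that by (intro freq_eq_0_if_not_leaf) (simp_all add: leaves_cat)
  have "freq (cat ys) (i - 1) a = 0" if "2 \<le> i"
    using that assms(3) by (intro zero) auto
  moreover have "freq (cat ys) i a = 0" if "i \<le> length ys"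
    using that assms(3) by (intro zero) auto
  ultimately show ?thesis
    using assms by (auto simp: freq_cat_Cons freq_Lf)
qed

lemma freq_cat_Cons_other:
  assumes "ys \<noteq> []" "a \<notin> set ys" "c \<noteq> a" "i \<in> {1..length ys + 1}"
  shows "freq (cat (a # ys)) i c =
    (of_bool (2 \<le> i) * freq (cat ys) (i - 1) c + of_bool (i \<le> length ys) * freq (cat ys) i c) / 2"
  using assms by (auto simp: freq_cat_Cons freq_Lf)

lemma choose_diff_one_split:
  assumes "1 \<le> i" "i \<le> m + 1" "2 \<le> j" "j \<le> m + 1"
  shows "(j - 1) choose (i - 1) =
    of_bool (2 \<le> i) * ((j - 2) choose (i - 2)) + of_bool (i \<le> m) * ((j - 2) choose (i - 1))"
proof -
  consider "i = 1" | "2 \<le> i" "i \<le> m" | "i = m + 1" "2 \<le> i"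
    using assms by linarith
  then show ?thesis
  proof cases
    case 1
    then show ?thesis using assms by simp
  next
    case 2
    then show ?thesis using assms choose_reduce_nat[of "j - 1" "i - 1"] by (simp add: numeral_2_eq_2)
  next
    case 3
    then show ?thesis using assms choose_reduce_nat[of "j - 1" "i - 1"] by (simp add: binomial_eq_0 numeral_2_eq_2)
  qed
qed

lemma choose_diff_one_mirror_split:
  assumes "1 \<le> i" "i \<le> m + 1" "2 \<le> j" "j \<le> m + 1"
  shows "((j - 1) choose (i - 1)) + ((j - 1) choose (m + 1 - i)) =
      of_bool (2 \<le> i) * (((j - 2) choose (i - 2)) + ((j - 2) choose (m + 1 - i)))
    + of_bool (i \<le> m) * (((j - 2) choose (i - 1)) + ((j - 2) choose (m - i)))"
proof -
  have "(m + 2 - i) - 1 = m + 1 - i" "(m + 2 - i) - 2 = m - i"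
    "2 \<le> m + 2 - i \<longleftrightarrow> i \<le> m" "m + 2 - i \<le> m \<longleftrightarrow> 2 \<le> i"
    using assms by auto
  then have "(j - 1) choose (m + 1 - i) =
      of_bool (i \<le> m) * ((j - 2) choose (m - i)) + of_bool (2 \<le> i) * ((j - 2) choose (m + 1 - i))"
    using choose_diff_one_split[of "m + 2 - i" m j] assms by simp
  then show ?thesis
    using choose_diff_one_split[OF assms] by (simp add: algebra_simps)
qed

text \<open>The second summand is the first one read from the right end, reflecting the reversal
  at the root; in this symmetric form the recursion is Pascal's rule applied twice.\<close>

definition cp_freq :: "nat \<Rightarrow> nat \<Rightarrow> nat \<Rightarrow> real" where
  "cp_freq m j i = (real ((j - 1) choose (i - 1)) + real ((j - 1) choose (m - i))) / 2 ^ j"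

lemma cp_freq_Suc:
  assumes "i \<in> {1..m + 1}" "j \<in> {2..m + 1}"
  shows "cp_freq (m + 1) j i =
    (of_bool (2 \<le> i) * cp_freq m (j - 1) (i - 1) + of_bool (i \<le> m) * cp_freq m (j - 1) i) / 2"
proof -
  have pow: "(2::real) ^ j = 2 * 2 ^ (j - 1)"
    using assms by (cases j) auto
  have "i - 1 - 1 = i - 2" "m - (i - 1) = m + 1 - i" "j - 1 - 1 = j - 2"
    using assms by auto
  then show ?thesis
    using arg_cong[OF choose_diff_one_mirror_split[of i m j], of real] assms
    unfolding cp_freq_def pow by (simp add: add_divide_distrib)
qed

lemma freq_cat_upt:
  assumes "i \<in> {1..m}" "j \<in> {1..m}"
  shows "freq (cat [s..<s + m]) i (s + j - 1) = cp_freq m j i"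
  using assms
proof (induction m arbitrary: s i j)
  case 0
  then show ?case by simp
next
  case (Suc m)
  show ?case
  proof (cases "m = 0")
    case True
    then show ?thesis using Suc.prems by (simp add: freq_Lf cp_freq_def)
  next
    case False
    define ys where "ys = [Suc s..<Suc s + m]"
    have ys: "[s..<s + Suc m] = s # ys" "ys \<noteq> []" "s \<notin> set ys" "length ys = m"
      using False by (simp_all add: ys_def upt_rec[of s] del: upt_Suc)
    show ?thesis
    proof (cases "j = 1")
      case True
      then show ?thesis
        unfolding ys(1) using Suc.prems freq_cat_Cons_head[OF ys(2,3), of i]
        by (auto simp: ys(4) cp_freq_def binomial_eq_0)
    next
      case False
      let ?c = "s + j - 1"
      have IH: "freq (cat ys) k ?c = cp_freq m (j - 1) k" if "k \<in> {1..m}" for k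
      proof -
        have "j - 1 \<in> {1..m}" "Suc s + (j - 1) - 1 = ?c"
          using Suc.prems False by auto
        then show ?thesis
          using Suc.IH[OF that, of "j - 1" "Suc s"] unfolding ys_def by simp
      qed
      have pred: "freq (cat ys) (i - 1) ?c = cp_freq m (j - 1) (i - 1)" if "2 \<le> i"
        using that Suc.prems by (intro IH) auto
      have same: "freq (cat ys) i ?c = cp_freq m (j - 1) i" if "i \<le> m"
        using that Suc.prems by (intro IH) auto
      have c_i: "?c \<noteq> s" "i \<in> {1..length ys + 1}"
        using Suc.prems False ys(4) by auto
      have "freq (cat [s..<s + Suc m]) i ?c =
          (of_bool (2 \<le> i) * freq (cat ys) (i - 1) ?c + of_bool (i \<le> m) * freq (cat ys) i ?c) / 2"
        unfolding ys(1) freq_cat_Cons_other[OF ys(2,3) c_i] ys(4) ..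
      also have "\<dots> = (of_bool (2 \<le> i) * cp_freq m (j - 1) (i - 1) + of_bool (i \<le> m) * cp_freq m (j - 1) i) / 2"
        using pred same by simp
      also have "\<dots> = cp_freq (Suc m) j i"
        using cp_freq_Suc[of i m j] Suc.prems False by simp
      finally show ?thesis .
    qed
  qed
qed

lemma freq_CP:
  assumes "i \<in> {1..m}" "j \<in> {1..m}"
  shows "freq (CP m) i j =
      1 / 2 ^ j * real ((j - 1) choose (i - 1)) * of_bool (i \<le> j)
    + 1 / 2 ^ j * real ((j - 1) choose ((i - 1) - (m - j))) * of_bool (i > m - j)"
proof -
  have "freq (CP m) i j = (real ((j - 1) choose (i - 1)) + real ((j - 1) choose (m - i))) / 2 ^ j"
    using freq_cat_upt[OF assms, of 1] assms by (simp add: CP_def cp_freq_def add.commute)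
  moreover have "(j - 1) choose (i - 1) = 0" if "\<not> i \<le> j"
    using that assms by (simp add: binomial_eq_0)
  moreover have "(j - 1) choose (m - i) = (if i > m - j then (j - 1) choose ((i - 1) - (m - j)) else 0)"
  proof (cases "i > m - j")
    case True
    then have "(i - 1) - (m - j) = (j - 1) - (m - i)"
      using assms by auto
    then show ?thesis
      using True binomial_symmetric[of "m - i" "j - 1"] assms by auto
  next
    case False
    then have "j - 1 < m - i"
      using assms by auto
    then show ?thesis
      using False by (simp add: binomial_eq_0)
  qed
  ultimately show ?thesis
    by (cases "i \<le> j") (simp_all add: add_divide_distrib)
qed

theorem theorem1:
  fixes m :: nat
  assumes "m \<ge> 2"
  shows "(\<forall>i\<in>{1..m}. \<forall>j\<in>{1..m}.
            freq (Flat m) i j = 1/2 * of_bool (i = j) + 1/2 * of_bool (i = m - j + 1))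
       \<and> (\<forall>k. m = 2 ^ k \<longrightarrow> (\<forall>i\<in>{1..m}. \<forall>j\<in>{1..m}. freq (Bal k) i j = 1 / real m))
       \<and> (\<forall>j\<in>{1..m}. \<forall>i\<in>{1..m}.
            freq (CP m) i j =
              1 / 2 ^ j * real ((j - 1) choose (i - 1)) * of_bool (i \<le> j)
            + 1 / 2 ^ j * real ((j - 1) choose ((i - 1) - (m - j))) * of_bool (i > m - j))"
  using assms freq_Flat freq_Bal freq_CP by blast

end
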